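(* Let $\underline{X}$ be an observation from a distribution $P_{(\theta,\underline{\eta})}$ indexed by $(\theta,\underline{\eta})$ in a parameter space $H$, with $\theta$ a real parameter of interest, and fix $\alpha\in[0,1]$. For a confidence interval $C(\underline{X})=[L(\underline{X}),U(\underline{X})]$ for $\theta$, define its modification $C^M$ by $$T(\underline{x},\theta_0)=\min\{\theta_0-L(\underline{x}),\,U(\underline{x})-\theta_0\},\quad h(\underline{x},\theta_0)=\sup_{(\theta,\underline{\eta})\in H,\ \theta=\theta_0}P_{(\theta,\underline{\eta})}\big(T(\underline{X},\theta_0)\le T(\underline{x},\theta_0)\big),$$ $$C^M(\underline{x})=\overline{\{\theta_0: h(\underline{x},\theta_0)>\alpha\}}.$$ If $C_0(\underline{X})$ is a $1-\alpha$ exact confidence interval for $\theta$, then $C_0^M(\underline{x})\subseteq C_0(\underline{x})$ for every $\underline{x}$. Consequently, for any confidence interval $C_0(\underline{X})$ of any level, $C_0^{M2}(\underline{x})=(C_0^M)^M(\underline{x})\subseteq C_0^M(\underline{x})$ for every $\underline{x}$.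
   Context: For a set $A$ of parameter values in $\mathbb{R}$, $\overline{A}$ denotes the smallest closed simply connected set (closed interval) containing $A$. An interval $C(\underline{X})$ for $\theta$ is "$1-\alpha$ exact" if $\inf_{(\theta,\underline{\eta})\in H}P_{(\theta,\underline{\eta})}(\theta\in C(\underline{X}))\ge1-\alpha$. *)

theory Defs
  imports "HOL-Probability.Probability"
begin

text \<open>A (set-valued) confidence region is C :: 'x => real set;
for an interval [L,U] its endpoints are recovered as Inf / Sup (in the extended reals,
so that possibly unbounded or empty intervals such as C^M can be modified again).\<close>

definition Tstat :: "('x \<Rightarrow> real set) \<Rightarrow> 'x \<Rightarrow> real \<Rightarrow> ereal" where
  "Tstat C x \<theta>0 = min (ereal \<theta>0 - Inf (ereal ` C x)) (Sup (ereal ` C x) - ereal \<theta>0)"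

definition hfun :: "(real \<times> 'e) set \<Rightarrow> (real \<times> 'e \<Rightarrow> 'x measure) \<Rightarrow> ('x \<Rightarrow> real set)
                     \<Rightarrow> 'x \<Rightarrow> real \<Rightarrow> ereal" where
  "hfun H P C x \<theta>0 =
     (SUP p \<in> {p \<in> H. fst p = \<theta>0}.
        ereal (measure (P p) {y \<in> space (P p). Tstat C y \<theta>0 \<le> Tstat C x \<theta>0}))"

definition interval_hull :: "real set \<Rightarrow> real set" where
  "interval_hull A = closure (convex hull A)"

definition modif :: "(real \<times> 'e) set \<Rightarrow> (real \<times> 'e \<Rightarrow> 'x measure) \<Rightarrow> real
                     \<Rightarrow> ('x \<Rightarrow> real set) \<Rightarrow> 'x \<Rightarrow> real set" where
  "modif H P \<alpha> C x = interval_hull {\<theta>0. hfun H P C x \<theta>0 > ereal \<alpha>}"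

definition exact_ci :: "(real \<times> 'e) set \<Rightarrow> (real \<times> 'e \<Rightarrow> 'x measure) \<Rightarrow> real
                        \<Rightarrow> ('x \<Rightarrow> real set) \<Rightarrow> bool" where
  "exact_ci H P \<alpha> C \<longleftrightarrow>
     (\<forall>p\<in>H. measure (P p) {y \<in> space (P p). fst p \<in> C y} \<ge> 1 - \<alpha>)"

end

theory Submission
  imports Defs
begin

text \<open>For a closed interval C(x), the statistic T(x,\<theta>) is nonnegative exactly when
\<theta> \<in> C(x). So if \<theta> \<notin> C(x), the event T(X,\<theta>) \<le> T(x,\<theta>) lies inside the
non-coverage event \<theta> \<notin> C(X), whence h(x,\<theta>) \<le> \<alpha> for an exact C and \<theta> \<notin> C^M(x).
For the second claim it suffices that C^M is always exact: C^M(X) misses \<theta> only if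
h(X,\<theta>) \<le> \<alpha>, and h(X,\<theta>) dominates the p-value of the statistic T(X,\<theta>), which is
at most \<alpha> with probability at most \<alpha>.\<close>

text \<open>The outer-probability form of 1-\<alpha> exactness: the non-coverage event need not be
measurable, which matters for C^M.\<close>

definition noncoverage_bounded :: "(real \<times> 'e) set \<Rightarrow> (real \<times> 'e \<Rightarrow> 'x measure) \<Rightarrow> real
                                    \<Rightarrow> ('x \<Rightarrow> real set) \<Rightarrow> bool" where
  "noncoverage_bounded H P \<alpha> C \<longleftrightarrow>
     (\<forall>p\<in>H. \<exists>B\<in>sets (P p). {y \<in> space (P p). fst p \<notin> C y} \<subseteq> B \<and> measure (P p) B \<le> \<alpha>)"

lemma closed_convex_real_avoids_point:
  fixes S :: "real set"
  assumes "closed S" "convex S" "t \<notin> S"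
  obtains e where "e > 0" "S \<subseteq> {t + e..}" | e where "e > 0" "S \<subseteq> {..t - e}"
proof -
  obtain e where "e > 0" and gap: "\<And>s. s \<in> S \<Longrightarrow> e \<le> \<bar>s - t\<bar>"
    using assms(1,3) unfolding closed_def open_dist dist_real_def
    by (metis ComplD ComplI not_le)
  have "(\<forall>s\<in>S. t < s) \<or> (\<forall>s\<in>S. s < t)"
    using assms(2,3) unfolding is_interval_convex_1[symmetric] is_interval_1
    by (metis linorder_neqE_linordered_idom order_less_imp_le)
  then show thesis
    using that \<open>e > 0\<close> gap by (fastforce simp: subset_eq)
qed

lemma Tstat_nonneg_iff:
  assumes "closed (C x)" "convex (C x)"
  shows "0 \<le> Tstat C x \<theta> \<longleftrightarrow> \<theta> \<in> C x"
proof
  assume "\<theta> \<in> C x"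
  then have "Inf (ereal ` C x) \<le> ereal \<theta>" "ereal \<theta> \<le> Sup (ereal ` C x)"
    by (auto intro: Inf_lower Sup_upper)
  then show "0 \<le> Tstat C x \<theta>"
    unfolding Tstat_def by (simp add: ereal_diff_positive)
next
  assume nonneg: "0 \<le> Tstat C x \<theta>"
  show "\<theta> \<in> C x"
  proof (rule ccontr)
    assume "\<theta> \<notin> C x"
    then consider e where "e > 0" "C x \<subseteq> {\<theta> + e..}" | e where "e > 0" "C x \<subseteq> {..\<theta> - e}"
      using closed_convex_real_avoids_point assms by metis
    then have "Tstat C x \<theta> < 0"
    proof cases
      case (1 e)
      then have "ereal (\<theta> + e) \<le> Inf (ereal ` C x)"
        by (auto intro!: Inf_greatest)
      with \<open>e > 0\<close> show ?thesis
        unfolding Tstat_def by (cases "Inf (ereal ` C x)") (auto simp: min_less_iff_disj)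
    next
      case (2 e)
      then have "Sup (ereal ` C x) \<le> ereal (\<theta> - e)"
        by (auto intro!: Sup_least)
      with \<open>e > 0\<close> show ?thesis
        unfolding Tstat_def by (cases "Sup (ereal ` C x)") (auto simp: min_less_iff_disj)
    qed
    with nonneg show False by simp
  qed
qed

lemma Tstat_Icc:
  assumes "L x \<le> U x"
  shows "Tstat (\<lambda>x. {L x..U x}) x \<theta> = ereal (min (\<theta> - L x) (U x - \<theta>))"
proof -
  have "Inf (ereal ` {L x..U x}) = ereal (L x)" "Sup (ereal ` {L x..U x}) = ereal (U x)"
    using assms by (auto intro!: antisym Inf_lower Inf_greatest Sup_upper Sup_least)
  then show ?thesis
    unfolding Tstat_def by (simp add: min_def)
qed

lemma modif_closed: "closed (modif H P \<alpha> C x)"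
  and modif_convex: "convex (modif H P \<alpha> C x)"
  unfolding modif_def interval_hull_def by (auto intro: convex_closure)

lemma superlevel_subset_modif: "{\<theta>. hfun H P C x \<theta> > ereal \<alpha>} \<subseteq> modif H P \<alpha> C x"
  unfolding modif_def interval_hull_def
  using closure_subset hull_subset by (metis subset_trans)

lemma measure_le_hfun:
  assumes "p \<in> H"
  shows "ereal (measure (P p) {y \<in> space (P p). Tstat C y (fst p) \<le> Tstat C x (fst p)})
           \<le> hfun H P C x (fst p)"
  unfolding hfun_def using assms by (intro SUP_upper) auto

lemma exact_ci_imp_noncoverage_bounded:
  assumes "exact_ci H P \<alpha> C"
    and "\<And>p. p \<in> H \<Longrightarrow> prob_space (P p)"
    and "\<And>p. p \<in> H \<Longrightarrow> {y \<in> space (P p). fst p \<in> C y} \<in> sets (P p)"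
  shows "noncoverage_bounded H P \<alpha> C"
  unfolding noncoverage_bounded_def
proof
  fix p assume "p \<in> H"
  interpret prob_space "P p" using assms(2) \<open>p \<in> H\<close> .
  let ?cover = "{y \<in> space (P p). fst p \<in> C y}"
  have "{y \<in> space (P p). fst p \<notin> C y} = space (P p) - ?cover"
    by auto
  moreover have "prob (space (P p) - ?cover) \<le> \<alpha>"
    using prob_compl assms \<open>p \<in> H\<close> unfolding exact_ci_def by auto
  moreover have "space (P p) - ?cover \<in> events"
    using assms(3) \<open>p \<in> H\<close> by auto
  ultimately show "\<exists>B\<in>sets (P p). {y \<in> space (P p). fst p \<notin> C y} \<subseteq> B \<and> prob B \<le> \<alpha>"
    by auto
qed

lemma small_pvalues_in_small_event:
  fixes T :: "'a \<Rightarrow> ereal"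
  assumes "finite_measure M" "0 \<le> \<alpha>" "T \<in> borel_measurable M"
  shows "\<exists>B\<in>sets M. {y \<in> space M. measure M {z \<in> space M. T z \<le> T y} \<le> \<alpha>} \<subseteq> B
                    \<and> measure M B \<le> \<alpha>"
proof -
  interpret finite_measure M by fact
  \<comment> \<open>Cover E by the sublevel set of T at the supremum of T over E if it is attained,
    and otherwise by the increasing union of the sublevel sets below it.\<close>
  define A where "A t = {z \<in> space M. T z \<le> t}" for t
  define E where "E = {y \<in> space M. measure M (A (T y)) \<le> \<alpha>}"
  have A_sets: "A t \<in> sets M" for t
    unfolding A_def using assms(3) by measurable
  have "\<exists>B\<in>sets M. E \<subseteq> B \<and> measure M B \<le> \<alpha>"
  proof (cases "E = {}")
    case True
    with assms(2) show ?thesis by (intro bexI[of _ "{}"]) auto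
  next
    case False
    show ?thesis
    proof (cases "Sup (T ` E) \<in> T ` E")
      case True
      then obtain y where "y \<in> E" "T y = Sup (T ` E)" by auto
      then have "E \<subseteq> A (T y)"
        unfolding E_def A_def by (auto intro: Sup_upper)
      with \<open>y \<in> E\<close> A_sets show ?thesis
        unfolding E_def by blast
    next
      case not_attained: False
      obtain f where f: "incseq f" "range f \<subseteq> T ` E" "Sup (T ` E) = Sup (range f)"
        using Sup_countable_SUP[of "T ` E"] \<open>E \<noteq> {}\<close> by auto
      have "incseq (\<lambda>n. A (f n))"
        using f(1) unfolding A_def incseq_def by (auto intro: order_trans)
      then have lim: "(\<lambda>n. measure M (A (f n))) \<longlonglongrightarrow> measure M (\<Union>n. A (f n))"
        using A_sets by (intro finite_Lim_measure_incseq) auto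
      have "measure M (A (f n)) \<le> \<alpha>" for n
      proof -
        obtain y where "y \<in> E" "f n = T y"
          using f(2) by blast
        then show ?thesis
          unfolding E_def by simp
      qed
      then have "measure M (\<Union>n. A (f n)) \<le> \<alpha>"
        by (intro LIMSEQ_le_const2[OF lim]) auto
      moreover have "E \<subseteq> (\<Union>n. A (f n))"
      proof
        fix y assume "y \<in> E"
        then have "T y \<le> Sup (T ` E)" "T y \<noteq> Sup (T ` E)"
          using not_attained by (auto intro: Sup_upper simp: image_iff)
        then have "T y < Sup (range f)"
          using f(3) by simp
        then obtain n where "T y < f n"
          by (auto simp: less_Sup_iff)
        with \<open>y \<in> E\<close> have "y \<in> A (f n)"
          unfolding E_def A_def by auto
        then show "y \<in> (\<Union>n. A (f n))"
          by blast
      qed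
      ultimately show ?thesis
        using A_sets by blast
    qed
  qed
  then show ?thesis
    unfolding E_def A_def .
qed

theorem modif_subset:
  assumes "\<And>p. p \<in> H \<Longrightarrow> prob_space (P p)"
    and closed: "\<And>y. closed (C y)" and convex: "\<And>y. convex (C y)"
    and "noncoverage_bounded H P \<alpha> C"
  shows "modif H P \<alpha> C x \<subseteq> C x"
proof -
  have "\<theta> \<in> C x" if "hfun H P C x \<theta> > ereal \<alpha>" for \<theta>
  proof (rule ccontr)
    assume "\<theta> \<notin> C x"
    then have Tx: "Tstat C x \<theta> < 0"
      using Tstat_nonneg_iff closed convex by (metis not_le)
    have not_covered: "\<theta> \<notin> C y" if "Tstat C y \<theta> < 0" for y
      using that Tstat_nonneg_iff[of C y \<theta>] closed convex by auto
    have "hfun H P C x \<theta> \<le> ereal \<alpha>"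
      unfolding hfun_def
    proof (rule SUP_least)
      fix p assume p: "p \<in> {p \<in> H. fst p = \<theta>}"
      interpret prob_space "P p" using assms(1) p by auto
      obtain B where B: "B \<in> events" "{y \<in> space (P p). \<theta> \<notin> C y} \<subseteq> B" "prob B \<le> \<alpha>"
        using assms(4) p unfolding noncoverage_bounded_def by force
      have "{y \<in> space (P p). Tstat C y \<theta> \<le> Tstat C x \<theta>} \<subseteq> B"
        using B(2) Tx not_covered by force
      then have "prob {y \<in> space (P p). Tstat C y \<theta> \<le> Tstat C x \<theta>} \<le> \<alpha>"
        using finite_measure_mono B(1,3) by (meson order_trans)
      then show "ereal (prob {y \<in> space (P p). Tstat C y \<theta> \<le> Tstat C x \<theta>}) \<le> ereal \<alpha>"
        by simp
    qed
    with that show False by simp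
  qed
  then have "{\<theta>. hfun H P C x \<theta> > ereal \<alpha>} \<subseteq> C x"
    by blast
  then show ?thesis
    unfolding modif_def interval_hull_def
    using closed convex by (simp add: closure_minimal hull_minimal)
qed

theorem noncoverage_bounded_modif:
  assumes "\<And>p. p \<in> H \<Longrightarrow> prob_space (P p)" and "0 \<le> \<alpha>"
    and "\<And>p. p \<in> H \<Longrightarrow> (\<lambda>y. Tstat C y (fst p)) \<in> borel_measurable (P p)"
  shows "noncoverage_bounded H P \<alpha> (modif H P \<alpha> C)"
  unfolding noncoverage_bounded_def
proof
  fix p assume "p \<in> H"
  let ?pvalue = "\<lambda>y. measure (P p) {z \<in> space (P p). Tstat C z (fst p) \<le> Tstat C y (fst p)}"
  have "?pvalue y \<le> \<alpha>" if "fst p \<notin> modif H P \<alpha> C y" for y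
  proof -
    have "\<not> hfun H P C y (fst p) > ereal \<alpha>"
      using that superlevel_subset_modif[of \<alpha> H P C y] by blast
    then have "hfun H P C y (fst p) \<le> ereal \<alpha>"
      by (simp add: not_less)
    then have "ereal (?pvalue y) \<le> ereal \<alpha>"
      by (rule order_trans[OF measure_le_hfun[OF \<open>p \<in> H\<close>]])
    then show ?thesis
      by simp
  qed
  then have "{y \<in> space (P p). fst p \<notin> modif H P \<alpha> C y} \<subseteq> {y \<in> space (P p). ?pvalue y \<le> \<alpha>}"
    by blast
  moreover have "finite_measure (P p)"
    using assms(1)[OF \<open>p \<in> H\<close>] by (rule prob_space.finite_measure)
  then have "\<exists>B\<in>sets (P p). {y \<in> space (P p). ?pvalue y \<le> \<alpha>} \<subseteq> B \<and> measure (P p) B \<le> \<alpha>"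
    using assms(2) assms(3)[OF \<open>p \<in> H\<close>] by (rule small_pvalues_in_small_event)
  ultimately show "\<exists>B\<in>sets (P p). {y \<in> space (P p). fst p \<notin> modif H P \<alpha> C y} \<subseteq> B
                    \<and> measure (P p) B \<le> \<alpha>"
    by blast
qed

theorem theorem2:
  fixes H :: "(real \<times> 'e) set" and P :: "real \<times> 'e \<Rightarrow> 'x measure"
    and \<alpha> :: real and L U :: "'x \<Rightarrow> real"
  assumes prob: "\<forall>p\<in>H. prob_space (P p)"
    and alpha: "0 \<le> \<alpha>" "\<alpha> \<le> 1"
    and LU: "\<forall>x. L x \<le> U x"
    and meas: "\<forall>p\<in>H. L \<in> borel_measurable (P p) \<and> U \<in> borel_measurable (P p)"
  shows "(exact_ci H P \<alpha> (\<lambda>x. {L x..U x}) \<longrightarrow>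
            (\<forall>x. modif H P \<alpha> (\<lambda>x. {L x..U x}) x \<subseteq> {L x..U x}))
       \<and> (\<forall>x. modif H P \<alpha> (modif H P \<alpha> (\<lambda>x. {L x..U x})) x
              \<subseteq> modif H P \<alpha> (\<lambda>x. {L x..U x}) x)"
proof -
  let ?C = "\<lambda>x. {L x..U x}"
  have prob_spaces: "\<And>p. p \<in> H \<Longrightarrow> prob_space (P p)"
    using prob by blast
  have L_U_measurable: "L \<in> borel_measurable (P p)" "U \<in> borel_measurable (P p)"
    if "p \<in> H" for p
    using meas that by auto
  have coverage_event: "{y \<in> space (P p). fst p \<in> ?C y} \<in> sets (P p)" if "p \<in> H" for p
    using L_U_measurable[OF that] by simp
  have Tstat_measurable: "(\<lambda>y. Tstat ?C y (fst p)) \<in> borel_measurable (P p)" if "p \<in> H" for p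
    unfolding Tstat_Icc[of L _ U, OF LU[rule_format]] using L_U_measurable[OF that] by measurable
  have "modif H P \<alpha> ?C x \<subseteq> ?C x" if "exact_ci H P \<alpha> ?C" for x
    by (rule modif_subset[OF prob_spaces _ _ exact_ci_imp_noncoverage_bounded[OF that prob_spaces coverage_event]])
      simp_all
  moreover have "modif H P \<alpha> (modif H P \<alpha> ?C) x \<subseteq> modif H P \<alpha> ?C x" for x
    by (rule modif_subset[OF prob_spaces modif_closed modif_convex
          noncoverage_bounded_modif[OF prob_spaces alpha(1) Tstat_measurable]])
  ultimately show ?thesis
    by blast
qed

end
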